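(* Let $\mathcal{G}$ be a Kripke structure (viewed as a one-agent concurrent game structure) and let $\forall\pi_1.\cdots\forall\pi_n.\mathbf{E}.\varphi$ be an $\texttt{AHLTL}$ formula, with $\varphi$ quantifier-free over path variables $\pi_1,\dots,\pi_n$. Consider the statements (1) $\mathcal{G}_{\mathit{stut}}\models[\langle\langle\{\mathit{sched}\}\rangle\rangle\pi_1.\cdots\langle\langle\{\mathit{sched}\}\rangle\rangle\pi_n.]\,\big(\varphi\wedge\bigwedge_{i=1}^n\mathit{fair}_{\pi_i}\big)$, where $\mathit{fair}_{\pi_i}:=\square\lozenge\neg\mathit{stut}_{\pi_i}$; (2) $\mathcal{G}\models_{\texttt{AHLTL}}\forall\pi_1.\cdots\forall\pi_n.\mathbf{E}.\varphi$. Then (1) implies (2). If moreover $\varphi$ is an admissible formula, then (1) and (2) are equivalent.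
   Context: A multi-stage concurrent game structure (MSCGS) is a tuple $\mathcal{G}=(S,s_0,\Xi,\mathscr{M},\delta,d,\mathbf{AP},\ell)$ with finite state set $S$, initial state $s_0$, finite agent set $\Xi$, finite move set $\mathscr{M}$, transition function $\delta:S\times(\Xi\to\mathscr{M})\to S$, stage function $d:\Xi\to\mathbb{N}$, atomic propositions $\mathbf{AP}$, labelling $\ell:S\to2^{\mathbf{AP}}$. A Kripke structure $(S,s_0,\to,\mathbf{AP},\ell)$ is viewed as the MSCGS with a single agent (stage $0$) whose moves choose the $\to$-successor; its paths are the sequences $s_0s_1\cdots$ with $s_i\to s_{i+1}$. Stutter version: for an MSCGS $\mathcal{G}$ and a fresh agent $\mathit{sched}\notin\Xi$, $\mathcal{G}_{\mathit{stut}}=(S\times\{0,1\},(s_0,0),\Xi\uplus\{\mathit{sched}\},\mathscr{M}\times\{0,1\},\delta',d',\mathbf{AP}\uplus\{\mathit{stut}\},\ell')$ where $\delta'((s,b),\sigma)=(\delta(s,\mathit{proj}_1\circ\sigma_{\mid\Xi}),0)$ if $(\mathit{proj}_2\circ\sigma)(\mathit{sched})=0$ and $\delta'((s,b),\sigma)=(s,1)$ if $(\mathit{proj}_2\circ\sigma)(\mathit{sched})=1$; $\ell'((s,0))=\ell(s)$, $\ell'((s,1))=\ell(s)\cup\{\mathit{stut}\}$; $d'(\xi)=d(\xi)$ for $\xi\in\Xi$ and $d'(\mathit{sched})=m+1$ with $m$ the maximal value of $d$. $\texttt{HyperATL}^*$ semantics of a quantifier block on an MSCGS, evaluated from the empty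 assignment: a strategy for agent $\xi$ in copy $j$ maps a finite history in $(S^n)^+$ (states of all $n$ copies) together with the moves already fixed for all agents of stage $<d(\xi)$ in all $n$ copies to a move. An outcome is $u\in(S^n)^\omega$ with $u(0)=(s_0,\dots,s_0)$ such that for every $i$ there are global move vectors $\sigma_1,\dots,\sigma_n$ with $u(i+1)_j=\delta(u(i)_j,\sigma_j)$ and $\sigma_j(\xi)$ given by the strategy of $\xi$ in copy $j$ for every controlled agent $\xi$. The block $[\langle\langle A_1\rangle\rangle\pi_1.\cdots\langle\langle A_n\rangle\rangle\pi_n.]\psi$ holds iff there exist strategies for all controlled agents such that every outcome $(t_1,\dots,t_n)$ satisfies $\psi$ under $\pi_j\mapsto t_j$, where quantifier-free $\psi$ is evaluated as synchronous LTL with $a_{\pi}$ meaning $a$ holds in the current state of the path bound to $\pi$. $\texttt{AHLTL}$ semantics: $\mathcal{G}\models_{\texttt{AHLTL}}\forall\pi_1.\cdots\forall\pi_n.\mathbf{E}.\varphi$ iff for all paths $t_1,\dots,t_n$ of $\mathcal{G}$ there is a fair trajectory such that the stuttered paths satisfy $\varphi$. A trajectory is a sequence $\tau\in(2^{\{\pi_1,\dots,\pi_n\}})^\omega$ (the set of paths that progress at each step); it is fair if every $\pi_i$ belongs to $\tau(m)$ for infinitely many $m$. With $p_i(m)=|\{m'<m\mid\pi_i\in\tau(m')\}|$, the stuttered path for $\pi_i$ is $t_i(p_i(0))t_i(p_i(1))\cdots$, and $\varphi$ is evaluated synchronously (as LTL over indexed propositions) on the stuttered paths. An admissible formula is a conjunction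 of formulas of the form $\square\bigwedge_{a\in P}(a_{\pi_i}\leftrightarrow a_{\pi_j})$ ($P$ a set of atomic propositions) and of stutter-invariant LTL formulas over a single path variable (formulas whose truth value is unchanged when passing to a stutter-equivalent trace). *)

theory Defs
  imports Main
begin

text \<open>Path variables pi_1 .. pi_n are represented by the indices 0 .. n-1.
  Prop a j stands for a_{pi_(j+1)}.\<close>

datatype 'a hltl =
    HTrue
  | Prop 'a nat
  | Not "'a hltl"
  | And "'a hltl" "'a hltl"
  | Next "'a hltl"
  | Until "'a hltl" "'a hltl"

definition Or :: "'a hltl \<Rightarrow> 'a hltl \<Rightarrow> 'a hltl" where
  "Or p q = Not (And (Not p) (Not q))"

definition Iff :: "'a hltl \<Rightarrow> 'a hltl \<Rightarrow> 'a hltl" where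
  "Iff p q = And (Or (Not p) q) (Or (Not q) p)"

definition Ev :: "'a hltl \<Rightarrow> 'a hltl" where
  "Ev p = Until HTrue p"

definition Glob :: "'a hltl \<Rightarrow> 'a hltl" where
  "Glob p = Not (Ev (Not p))"

fun conj_list :: "'a hltl list \<Rightarrow> 'a hltl" where
  "conj_list [] = HTrue"
| "conj_list [p] = p"
| "conj_list (p # ps) = And p (conj_list ps)"

fun vars :: "'a hltl \<Rightarrow> nat set" where
  "vars HTrue = {}"
| "vars (Prop a j) = {j}"
| "vars (Not p) = vars p"
| "vars (And p q) = vars p \<union> vars q"
| "vars (Next p) = vars p"
| "vars (Until p q) = vars p \<union> vars q"

text \<open>Semantics: w j i is the label (set of atomic propositions) of the path bound to
  variable j at position i.\<close>

fun hsat :: "(nat \<Rightarrow> nat \<Rightarrow> 'a set) \<Rightarrow> nat \<Rightarrow> 'a hltl \<Rightarrow> bool" where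
  "hsat w i HTrue = True"
| "hsat w i (Prop a j) = (a \<in> w j i)"
| "hsat w i (Not p) = (\<not> hsat w i p)"
| "hsat w i (And p q) = (hsat w i p \<and> hsat w i q)"
| "hsat w i (Next p) = hsat w (Suc i) p"
| "hsat w i (Until p q) = (\<exists>k\<ge>i. hsat w k q \<and> (\<forall>l. i \<le> l \<and> l < k \<longrightarrow> hsat w l p))"

record ('s, 'ag, 'm, 'ap) mscgs =
  states :: "'s set"
  init   :: 's
  agents :: "'ag set"
  moves  :: "'m set"
  delta  :: "'s \<Rightarrow> ('ag \<Rightarrow> 'm) \<Rightarrow> 's"
  stage  :: "'ag \<Rightarrow> nat"
  lab    :: "'s \<Rightarrow> 'ap set"

text \<open>A strategy for agent xi (in some copy) for a block with n copies: it maps a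
  finite non-empty history of n-tuples of states (each tuple a list of length n) together
  with the move vectors of all n copies to a move, and depends on the move vectors only
  through the moves of agents of stage strictly smaller than the stage of xi.\<close>

definition is_strategy ::
  "('s, 'ag, 'm, 'ap) mscgs \<Rightarrow> nat \<Rightarrow> 'ag \<Rightarrow> ('s list list \<Rightarrow> ('ag \<Rightarrow> 'm) list \<Rightarrow> 'm) \<Rightarrow> bool" where
  "is_strategy G n xi f \<longleftrightarrow>
     (\<forall>h sig. f h sig \<in> moves G) \<and>
     (\<forall>h sig sig'. length sig = n \<longrightarrow> length sig' = n \<longrightarrow>
        (\<forall>j<n. \<forall>xi'\<in>agents G. stage G xi' < stage G xi \<longrightarrow> (sig ! j) xi' = (sig' ! j) xi') \<longrightarrow>
        f h sig = f h sig')"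

text \<open>Outcomes of a block with controlled-agent sets As (As ! j for copy j) under the
  strategy family str (str j xi = strategy of agent xi in copy j).\<close>

definition is_outcome ::
  "('s, 'ag, 'm, 'ap) mscgs \<Rightarrow> 'ag set list \<Rightarrow> (nat \<Rightarrow> 'ag \<Rightarrow> ('s list list \<Rightarrow> ('ag \<Rightarrow> 'm) list \<Rightarrow> 'm))
     \<Rightarrow> (nat \<Rightarrow> 's list) \<Rightarrow> bool" where
  "is_outcome G As str u \<longleftrightarrow>
     (let n = length As in
       u 0 = replicate n (init G) \<and>
       (\<forall>i. length (u (Suc i)) = n \<and>
          (\<exists>sig. length sig = n \<and>
             (\<forall>j<n. \<forall>xi\<in>agents G. (sig ! j) xi \<in> moves G) \<and>
             (\<forall>j<n. u (Suc i) ! j = delta G (u i ! j) (sig ! j)) \<and>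
             (\<forall>j<n. \<forall>xi\<in>As ! j. (sig ! j) xi = str j xi (map u [0..<Suc i]) sig))))"

text \<open>HyperATL* semantics of the quantifier block
  [<<As!0>> pi_1. ... <<As!(n-1)>> pi_n.] psi, evaluated from the empty assignment.\<close>

definition hyperatl_block :: "('s, 'ag, 'm, 'ap) mscgs \<Rightarrow> 'ag set list \<Rightarrow> 'ap hltl \<Rightarrow> bool" where
  "hyperatl_block G As psi \<longleftrightarrow>
     (\<exists>str. (\<forall>j<length As. \<forall>xi\<in>As ! j. is_strategy G (length As) xi (str j xi)) \<and>
       (\<forall>u. is_outcome G As str u \<longrightarrow> hsat (\<lambda>j i. lab G (u i ! j)) 0 psi))"

text \<open>Agent sched = None, agent xi = Some xi; proposition stut = None, a = Some a;
  the bit 0/1 is False/True.\<close>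

definition stut :: "('s, 'ag, 'm, 'ap) mscgs \<Rightarrow> ('s \<times> bool, 'ag option, 'm \<times> bool, 'ap option) mscgs" where
  "stut G =
    \<lparr> states = states G \<times> UNIV,
      init = (init G, False),
      agents = Some ` agents G \<union> {None},
      moves = moves G \<times> UNIV,
      delta = (\<lambda>(s, b) sig. if snd (sig None) then (s, True)
                            else (delta G s (\<lambda>xi. fst (sig (Some xi))), False)),
      stage = (\<lambda>a. case a of None \<Rightarrow> Max (stage G ` agents G) + 1 | Some xi \<Rightarrow> stage G xi),
      lab = (\<lambda>(s, b). Some ` lab G s \<union> (if b then {None} else {})) \<rparr>"

record ('s, 'ap) kripke =
  kstates :: "'s set"
  kinit   :: 's
  krel    :: "'s \<Rightarrow> 's \<Rightarrow> bool"
  klab    :: "'s \<Rightarrow> 'ap set"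

definition kripke_wf :: "('s, 'ap) kripke \<Rightarrow> bool" where
  "kripke_wf K \<longleftrightarrow> finite (kstates K) \<and> kinit K \<in> kstates K \<and>
     (\<forall>s t. krel K s t \<longrightarrow> s \<in> kstates K \<and> t \<in> kstates K) \<and>
     (\<forall>s\<in>kstates K. \<exists>t. krel K s t)"

text \<open>The Kripke structure as a one-agent MSCGS (the single agent, of stage 0, chooses the
  successor; a move that is not a successor is treated as some fixed successor).\<close>

definition kripke_mscgs :: "('s, 'ap) kripke \<Rightarrow> ('s, unit, 's, 'ap) mscgs" where
  "kripke_mscgs K =
    \<lparr> states = kstates K, init = kinit K, agents = UNIV, moves = kstates K,
      delta = (\<lambda>s sig. if krel K s (sig ()) then sig () else (SOME t. krel K s t)),
      stage = (\<lambda>_. 0), lab = klab K \<rparr>"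

definition kpath :: "('s, 'ap) kripke \<Rightarrow> (nat \<Rightarrow> 's) \<Rightarrow> bool" where
  "kpath K t \<longleftrightarrow> t 0 = kinit K \<and> (\<forall>i. krel K (t i) (t (Suc i)))"

definition progress :: "(nat \<Rightarrow> nat set) \<Rightarrow> nat \<Rightarrow> nat \<Rightarrow> nat" where
  "progress tau j m = card {m'. m' < m \<and> j \<in> tau m'}"

definition fair_traj :: "nat \<Rightarrow> (nat \<Rightarrow> nat set) \<Rightarrow> bool" where
  "fair_traj n tau \<longleftrightarrow> (\<forall>m. tau m \<subseteq> {..<n}) \<and> (\<forall>j<n. \<exists>\<^sub>\<infinity>m. j \<in> tau m)"

definition ahltl_sat :: "('s, 'ap) kripke \<Rightarrow> nat \<Rightarrow> 'ap hltl \<Rightarrow> bool" where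
  "ahltl_sat K n phi \<longleftrightarrow>
     (\<forall>ts. length ts = n \<longrightarrow> (\<forall>j<n. kpath K (ts ! j)) \<longrightarrow>
        (\<exists>tau. fair_traj n tau \<and>
           hsat (\<lambda>j m. klab K ((ts ! j) (progress tau j m))) 0 phi))"

definition stutter_equiv :: "(nat \<Rightarrow> 'a) \<Rightarrow> (nat \<Rightarrow> 'a) \<Rightarrow> bool" where
  "stutter_equiv v w \<longleftrightarrow>
     (\<exists>f g :: nat \<Rightarrow> nat. strict_mono f \<and> strict_mono g \<and> f 0 = 0 \<and> g 0 = 0 \<and>
        (\<forall>k. (\<forall>i. f k \<le> i \<and> i < f (Suc k) \<longrightarrow> v i = v (f k)) \<and>
             (\<forall>i. g k \<le> i \<and> i < g (Suc k) \<longrightarrow> w i = w (g k)) \<and>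
             v (f k) = w (g k)))"

definition eq_formula :: "'a hltl \<Rightarrow> bool" where
  "eq_formula c \<longleftrightarrow>
     (\<exists>as i j. c = Glob (conj_list (map (\<lambda>a. Iff (Prop a i) (Prop a j)) as)))"

definition stutter_inv_single :: "'a hltl \<Rightarrow> bool" where
  "stutter_inv_single c \<longleftrightarrow>
     (\<exists>k. vars c \<subseteq> {k} \<and>
        (\<forall>w w'. stutter_equiv (w k) (w' k) \<longrightarrow> (hsat w 0 c \<longleftrightarrow> hsat w' 0 c)))"

definition admissible :: "'a hltl \<Rightarrow> bool" where
  "admissible phi \<longleftrightarrow>
     (\<exists>cs. cs \<noteq> [] \<and> phi = conj_list cs \<and>
        (\<forall>c\<in>set cs. eq_formula c \<or> stutter_inv_single c))"

definition fair_formula :: "nat \<Rightarrow> 'a option hltl" where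
  "fair_formula j = Glob (Ev (Not (Prop None j)))"

end

theory Submission
  imports Defs "HOL-Library.Infinite_Set"
begin

text \<open>
  (1) implies (2): given paths \<open>t\<^sub>1, \<dots>, t\<^sub>n\<close>, let the Kripke agent of copy \<open>j\<close> follow
  \<open>t\<^sub>j\<close>. Against this behaviour the winning scheduler produces an outcome whose stutter bits
  form a trajectory, fair by the conjuncts \<open>fair\<^sub>\<pi>\<close>, and whose labels are exactly the stuttered
  paths.

  (2) implies (1) for admissible \<open>\<phi>\<close>: the scheduler greedily advances the largest set of copies
  whose moves keep every equality conjunct \<open>a\<^sub>\<pi>\<^sub>i \<leftrightarrow> a\<^sub>\<pi>\<^sub>j\<close> true. The equality
  conjuncts then hold along every outcome, and each stutter-invariant conjunct transfers from an AHLTL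
  trajectory for the same paths, the two words being stutterings of each other. The difficulty is
  fairness. If some copies stall forever from time \<open>T\<close> on, continue their paths by the proposed
  successors and apply (2); in the resulting synchronisation look at the copies that first move past
  their stalled positions. Counting label changes in both synchronisations shows that no constrained
  partner of these copies can observe a change, so they could have advanced together at time \<open>T\<close>,
  contradicting greediness.
\<close>

lemma hsat_map_hltl: "hsat w i (map_hltl f phi) = hsat (\<lambda>j k. f -` w j k) i phi"
  by (induction phi arbitrary: i) auto

lemma hsat_cong: "(\<And>j k. j \<in> vars phi \<Longrightarrow> w j k = w' j k) \<Longrightarrow> hsat w i phi = hsat w' i phi"
  by (induction phi arbitrary: i) auto

lemma hsat_conj_list [simp]: "hsat w i (conj_list cs) \<longleftrightarrow> (\<forall>c\<in>set cs. hsat w i c)"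
  by (induction cs rule: conj_list.induct) auto

lemma vars_conj_list [simp]: "vars (conj_list cs) = (\<Union>c\<in>set cs. vars c)"
  by (induction cs rule: conj_list.induct) auto

lemma hsat_Ev [simp]: "hsat w i (Ev phi) \<longleftrightarrow> (\<exists>k\<ge>i. hsat w k phi)"
  by (auto simp: Ev_def)

lemma hsat_Glob [simp]: "hsat w i (Glob phi) \<longleftrightarrow> (\<forall>k\<ge>i. hsat w k phi)"
  by (auto simp: Glob_def)

lemma hsat_Iff [simp]: "hsat w i (Iff phi psi) \<longleftrightarrow> (hsat w i phi \<longleftrightarrow> hsat w i psi)"
  by (auto simp: Iff_def Or_def)

lemma vars_Glob [simp]: "vars (Glob phi) = vars phi"
  by (simp add: Glob_def Ev_def)

lemma vars_Iff [simp]: "vars (Iff phi psi) = vars phi \<union> vars psi"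
  by (auto simp: Iff_def Or_def)

lemma hsat_fair_formulas:
  "hsat w 0 (conj_list (map fair_formula [0..<n])) \<longleftrightarrow> (\<forall>j<n. \<exists>\<^sub>\<infinity>k. None \<notin> w j k)"
  by (auto simp: fair_formula_def INFM_nat_le)

lemma INFM_Suc_iff: "(\<exists>\<^sub>\<infinity>i. P (Suc i)) \<longleftrightarrow> (\<exists>\<^sub>\<infinity>i. P i)"
  unfolding INFM_nat_le by (metis Suc_le_D Suc_leD Suc_le_mono)

definition agree_formula :: "'a list \<Rightarrow> nat \<Rightarrow> nat \<Rightarrow> 'a hltl" where
  "agree_formula as x y = Glob (conj_list (map (\<lambda>a. Iff (Prop a x) (Prop a y)) as))"

lemma eq_formula_iff: "eq_formula c \<longleftrightarrow> (\<exists>as x y. c = agree_formula as x y)"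
  by (simp add: eq_formula_def agree_formula_def)

lemma hsat_agree_formula:
  "hsat w i (agree_formula as x y) \<longleftrightarrow> (\<forall>k\<ge>i. \<forall>a\<in>set as. a \<in> w x k \<longleftrightarrow> a \<in> w y k)"
  by (auto simp: agree_formula_def)

lemma vars_agree_formula: "a \<in> set as \<Longrightarrow> vars (agree_formula as x y) = {x, y}"
  by (auto simp: agree_formula_def)

section \<open>Stutter indices\<close>

definition stutter_index :: "(nat \<Rightarrow> nat) \<Rightarrow> bool" where
  "stutter_index p \<longleftrightarrow> p 0 = 0 \<and> (\<forall>m. p (Suc m) = p m \<or> p (Suc m) = Suc (p m))"

lemma progress_0 [simp]: "progress tau j 0 = 0"
  by (simp add: progress_def)

lemma progress_Suc:
  "progress tau j (Suc m) = (if j \<in> tau m then Suc (progress tau j m) else progress tau j m)"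
proof -
  have "{m'. m' < Suc m \<and> j \<in> tau m'} = {m'. m' < m \<and> j \<in> tau m'} \<union> (if j \<in> tau m then {m} else {})"
    by (auto simp: less_Suc_eq)
  then show ?thesis by (simp add: progress_def)
qed

lemma progress_const_after:
  assumes "\<And>m. T \<le> m \<Longrightarrow> j \<notin> tau m" "T \<le> m"
  shows "progress tau j m = progress tau j T"
  using assms(2) by (induction m rule: dec_induct) (simp_all add: progress_Suc assms(1))

lemma stutter_index_progress: "stutter_index (progress tau j)"
  by (simp add: stutter_index_def progress_Suc)

lemma stutter_index_mono: "stutter_index p \<Longrightarrow> mono p"
  unfolding stutter_index_def mono_iff_le_Suc by (metis le_Suc_eq order_refl)

lemma stutter_index_reaches:
  assumes p: "stutter_index p" shows "r \<le> p m \<Longrightarrow> \<exists>m'\<le>m. p m' = r"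
proof (induction m)
  case 0 then show ?case using p by (simp add: stutter_index_def)
next
  case (Suc m)
  show ?case
  proof (cases "r = p (Suc m)")
    case False
    then have "r \<le> p m" using Suc.prems p unfolding stutter_index_def by (metis le_Suc_eq)
    then show ?thesis using Suc.IH le_SucI by blast
  qed blast
qed

lemma progress_surj:
  assumes "\<exists>\<^sub>\<infinity>m. j \<in> tau m" shows "surj (progress tau j)"
proof -
  have "\<exists>m. r \<le> progress tau j m" for r
  proof (induction r)
    case (Suc r)
    then obtain m where m: "r \<le> progress tau j m" by blast
    obtain m' where "m \<le> m'" "j \<in> tau m'" using assms by (auto simp: INFM_nat_le)
    then have "Suc (progress tau j m) \<le> progress tau j (Suc m')"
      using monoD[OF stutter_index_mono[OF stutter_index_progress]] by (simp add: progress_Suc)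
    then show ?case using m by (intro exI[of _ "Suc m'"]) simp
  qed simp
  then have "r \<in> range (progress tau j)" for r
    using stutter_index_reaches[OF stutter_index_progress] by (metis rangeI)
  then show ?thesis by blast
qed

text \<open>\<open>first_hit p r\<close> is junk unless \<open>r \<in> range p\<close>.\<close>

definition first_hit :: "(nat \<Rightarrow> nat) \<Rightarrow> nat \<Rightarrow> nat" where
  "first_hit p r = (LEAST m. p m = r)"

lemma first_hit_hits: "r \<in> range p \<Longrightarrow> p (first_hit p r) = r"
  unfolding first_hit_def by (auto intro: LeastI)

lemma first_hit_le: "p m = r \<Longrightarrow> first_hit p r \<le> m"
  unfolding first_hit_def by (rule Least_le)

lemma first_hit_0: "stutter_index p \<Longrightarrow> first_hit p 0 = 0"
  using first_hit_le[of p 0 0] by (simp add: stutter_index_def)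

lemma first_hit_Suc:
  assumes "stutter_index p" "Suc r \<in> range p"
  obtains k where "first_hit p (Suc r) = Suc k" "p k = r"
proof -
  define m where "m = first_hit p (Suc r)"
  have hit: "p m = Suc r" using first_hit_hits[OF assms(2)] by (simp add: m_def)
  with assms(1) obtain k where k: "m = Suc k" by (cases m) (auto simp: stutter_index_def)
  have "p k \<noteq> Suc r" using first_hit_le[of p k "Suc r"] k by (auto simp: m_def)
  then have "p k = r" using hit k assms(1) unfolding stutter_index_def by (metis Suc_inject)
  then show ?thesis using that k m_def by blast
qed

lemma first_hit_block:
  assumes p: "stutter_index p" and hit: "Suc r \<in> range p"
    and i: "first_hit p r \<le> i" "i < first_hit p (Suc r)"
  shows "p i = r"
proof -
  obtain k where k: "first_hit p (Suc r) = Suc k" "p k = r" using first_hit_Suc[OF p hit] .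
  then have "r \<le> p i"
    using first_hit_hits[of r p] monoD[OF stutter_index_mono[OF p] i(1)] by auto
  moreover have "\<not> Suc r \<le> p i"
  proof
    assume "Suc r \<le> p i"
    then obtain i' where "i' \<le> i" "p i' = Suc r" using stutter_index_reaches[OF p] by blast
    then show False using first_hit_le[of p i' "Suc r"] i(2) by simp
  qed
  ultimately show ?thesis by simp
qed

lemma strict_mono_first_hit:
  assumes p: "stutter_index p" "surj p" shows "strict_mono (first_hit p)"
  unfolding strict_mono_Suc_iff
proof
  fix r
  obtain k where k: "first_hit p (Suc r) = Suc k" "p k = r" using first_hit_Suc[OF p(1)] p(2) by blast
  then show "first_hit p r < first_hit p (Suc r)" using first_hit_le[of p k r] by simp
qed

lemma stutter_equiv_stutter_indices:
  assumes p: "stutter_index p" "surj p" and p': "stutter_index p'" "surj p'"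
  shows "stutter_equiv (\<lambda>m. Y (p m)) (\<lambda>m. Y (p' m))"
  unfolding stutter_equiv_def
proof (intro exI conjI allI impI)
  show "strict_mono (first_hit p)" "strict_mono (first_hit p')"
    using strict_mono_first_hit p p' by auto
  show "first_hit p 0 = 0" "first_hit p' 0 = 0" using first_hit_0 p(1) p'(1) by auto
  fix k i
  show "Y (p (first_hit p k)) = Y (p' (first_hit p' k))"
    using first_hit_hits p(2) p'(2) by (metis UNIV_I)
  show "Y (p i) = Y (p (first_hit p k))" if "first_hit p k \<le> i \<and> i < first_hit p (Suc k)"
    using that first_hit_block[OF p(1)] first_hit_hits p(2) by (metis UNIV_I)
  show "Y (p' i) = Y (p' (first_hit p' k))" if "first_hit p' k \<le> i \<and> i < first_hit p' (Suc k)"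
    using that first_hit_block[OF p'(1)] first_hit_hits p'(2) by (metis UNIV_I)
qed

lemma stutter_index_factor:
  assumes p: "stutter_index p" and stay: "\<And>m. p (Suc m) = p m \<Longrightarrow> z (Suc m) = z m"
  shows "z (first_hit p (p m)) = z m"
proof -
  define f where "f = first_hit p (p m)"
  have "f \<le> m" unfolding f_def by (rule first_hit_le) simp
  have "p f = p m" unfolding f_def by (rule first_hit_hits) simp
  then have const: "p i = p m" if "f \<le> i" "i \<le> m" for i
    using that monoD[OF stutter_index_mono[OF p], of f i] monoD[OF stutter_index_mono[OF p], of i m]
    by simp
  have "f + d \<le> m \<Longrightarrow> z (f + d) = z f" for d
  proof (induction d)
    case (Suc d)
    then have "p (Suc (f + d)) = p (f + d)" using const[of "f + d"] const[of "Suc (f + d)"] by simp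
    then have "z (Suc (f + d)) = z (f + d)" by (rule stay)
    then show ?case using Suc by simp
  qed simp
  from this[of "m - f"] show ?thesis using \<open>f \<le> m\<close> by (simp add: f_def)
qed

lemma stutter_index_factor_step:
  assumes p: "stutter_index p" and stay: "\<And>m. p (Suc m) = p m \<Longrightarrow> z (Suc m) = z m"
    and step: "\<And>m. p (Suc m) = Suc (p m) \<Longrightarrow> R (z m) (z (Suc m))"
    and hit: "Suc r \<in> range p"
  shows "R (z (first_hit p r)) (z (first_hit p (Suc r)))"
proof -
  obtain k where k: "first_hit p (Suc r) = Suc k" "p k = r" using first_hit_Suc[OF p hit] .
  then have "p (Suc k) = Suc (p k)" using first_hit_hits[OF hit] by simp
  then have "R (z k) (z (Suc k))" by (rule step)
  moreover have "z (first_hit p r) = z k" using stutter_index_factor[of p z, OF p stay, of k] k(2) by simp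
  ultimately show ?thesis using k(1) by simp
qed

lemma progress_stay_or_step:
  assumes "\<And>m. z (Suc m) = (if j \<in> tau m then q m else z m)"
  shows "progress tau j (Suc m) = progress tau j m \<Longrightarrow> z (Suc m) = z m"
    and "progress tau j (Suc m) = Suc (progress tau j m) \<Longrightarrow> z (Suc m) = q m"
  using assms by (auto simp: progress_Suc split: if_splits)

lemma krel_kstates: "kripke_wf K \<Longrightarrow> krel K s t \<Longrightarrow> s \<in> kstates K \<and> t \<in> kstates K"
  unfolding kripke_wf_def by blast

lemma kpath_kstates: "kripke_wf K \<Longrightarrow> kpath K t \<Longrightarrow> t i \<in> kstates K"
  unfolding kpath_def using krel_kstates by metis

lemma kripke_run_from:
  assumes "kripke_wf K" "s \<in> kstates K"
  shows "\<exists>e. e 0 = s \<and> (\<forall>r. krel K (e r) (e (Suc r)))"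
proof -
  have "\<exists>e. \<forall>r. (e r \<in> kstates K \<and> (r = 0 \<longrightarrow> e r = s)) \<and> krel K (e r) (e (Suc r))"
    using assms unfolding kripke_wf_def by (intro dependent_nat_choice; blast)
  then show ?thesis by blast
qed

lemma kpath_extend:
  assumes wf: "kripke_wf K" and y0: "y 0 = kinit K"
    and steps: "\<And>r. r < b \<Longrightarrow> krel K (y r) (y (Suc r))" and q: "krel K (y b) q"
  shows "\<exists>y'. kpath K y' \<and> (\<forall>r\<le>b. y' r = y r) \<and> y' (Suc b) = q"
proof -
  have "q \<in> kstates K" using krel_kstates[OF wf q] by blast
  then obtain e where e0: "e 0 = q" and e: "\<And>r. krel K (e r) (e (Suc r))"
    using kripke_run_from[OF wf] by blast
  define y' where "y' r = (if r \<le> b then y r else e (r - Suc b))" for r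
  have "krel K (y' r) (y' (Suc r))" for r
  proof -
    consider "r < b" | "r = b" | "b < r" by linarith
    then show ?thesis
    proof cases
      case 1 then show ?thesis using steps by (simp add: y'_def)
    next
      case 2 then show ?thesis using q e0 by (simp add: y'_def)
    next
      case 3 then show ?thesis using e[of "r - Suc b"] by (simp add: y'_def Suc_diff_Suc)
    qed
  qed
  then have "kpath K y'" using y0 by (simp add: kpath_def y'_def)
  then show ?thesis using e0 by (auto simp: y'_def)
qed

lemma kpath_along_progress:
  assumes z0: "z 0 = kinit K" and zS: "\<And>m. z (Suc m) = (if j \<in> tau m then q m else z m)"
    and kr: "\<And>m. krel K (z m) (q m)" and inf: "\<exists>\<^sub>\<infinity>m. j \<in> tau m"
  shows "\<exists>y. kpath K y \<and> (\<forall>m. z m = y (progress tau j m))"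
proof -
  let ?p = "progress tau j"
  note p = stutter_index_progress[of tau j]
  note stay = progress_stay_or_step(1)[of z j tau q, OF zS]
  have step: "?p (Suc m) = Suc (?p m) \<Longrightarrow> krel K (z m) (z (Suc m))" for m
    using progress_stay_or_step(2)[of z j tau q, OF zS] kr by simp
  have "krel K (z (first_hit ?p r)) (z (first_hit ?p (Suc r)))" for r
    using stutter_index_factor_step[of ?p z "krel K", OF p stay step] progress_surj[OF inf] by simp
  then have "kpath K (\<lambda>r. z (first_hit ?p r))"
    unfolding kpath_def using z0 first_hit_0[OF p] by simp
  moreover have "z m = z (first_hit ?p (?p m))" for m
    by (rule stutter_index_factor[of ?p z, OF p stay, symmetric])
  ultimately show ?thesis by blast
qed

lemma kpath_along_stuck_progress:
  assumes wf: "kripke_wf K" and z0: "z 0 = kinit K"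
    and zS: "\<And>m. z (Suc m) = (if j \<in> tau m then q m else z m)"
    and kr: "\<And>m. krel K (z m) (q m)" and stuck: "\<And>m. T \<le> m \<Longrightarrow> j \<notin> tau m"
  shows "\<exists>y. kpath K y \<and> (\<forall>m. z m = y (progress tau j m)) \<and> y (Suc (progress tau j T)) = q T"
proof -
  let ?p = "progress tau j"
  define b where "b = ?p T"
  note p = stutter_index_progress[of tau j]
  note stay = progress_stay_or_step(1)[of z j tau q, OF zS]
  have step: "?p (Suc m) = Suc (?p m) \<Longrightarrow> krel K (z m) (z (Suc m))" for m
    using progress_stay_or_step(2)[of z j tau q, OF zS] kr by simp
  have bounded: "?p m \<le> b" for m
  proof (cases "m \<le> T")
    case True then show ?thesis using monoD[OF stutter_index_mono[OF p]] by (simp add: b_def)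
  next
    case False then show ?thesis using progress_const_after[of T j tau m] stuck by (simp add: b_def)
  qed
  have "krel K (z (first_hit ?p r)) (z (first_hit ?p (Suc r)))" if "r < b" for r
  proof -
    have "Suc r \<le> ?p T" using that by (simp add: b_def)
    then obtain m' where "?p m' = Suc r" using stutter_index_reaches[OF p] by blast
    then have "Suc r \<in> range ?p" by (metis rangeI)
    then show ?thesis using stutter_index_factor_step[of ?p z "krel K", OF p stay step] by simp
  qed
  moreover have "z (first_hit ?p b) = z T" unfolding b_def by (rule stutter_index_factor[of ?p z, OF p stay])
  ultimately obtain y where y: "kpath K y" "\<forall>r\<le>b. y r = z (first_hit ?p r)" "y (Suc b) = q T"
    using kpath_extend[OF wf, of "\<lambda>r. z (first_hit ?p r)" b "q T"] z0 first_hit_0[OF p] kr[of T] by auto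
  have "z m = y (?p m)" for m
    using stutter_index_factor[of ?p z, OF p stay, of m] bounded[of m] y(2) by simp
  then show ?thesis using y by (auto simp: b_def)
qed

section \<open>Counting changes\<close>

fun changes :: "(nat \<Rightarrow> bool) \<Rightarrow> nat \<Rightarrow> nat" where
  "changes A 0 = 0"
| "changes A (Suc r) = changes A r + (if A (Suc r) \<noteq> A r then 1 else 0)"

lemma mono_changes: "mono (changes A)"
  by (simp add: mono_iff_le_Suc)

lemma changes_step:
  "q = p \<or> q = Suc p \<Longrightarrow> changes A q = changes A p + (if A q \<noteq> A p then 1 else 0)"
  by auto

lemma changes_sync:
  fixes A B :: "nat \<Rightarrow> bool"
  assumes pa: "stutter_index pa" and pb: "stutter_index pb" and sync: "\<And>m. A (pa m) = B (pb m)"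
  shows "changes A (pa m) = changes B (pb m)"
proof (induction m)
  case 0 then show ?case using pa pb by (simp add: stutter_index_def)
next
  case (Suc m)
  have "changes A (pa (Suc m)) = changes A (pa m) + (if A (pa (Suc m)) \<noteq> A (pa m) then 1 else 0)"
    using pa by (intro changes_step) (simp add: stutter_index_def)
  moreover have "changes B (pb (Suc m)) = changes B (pb m) + (if B (pb (Suc m)) \<noteq> B (pb m) then 1 else 0)"
    using pb by (intro changes_step) (simp add: stutter_index_def)
  ultimately show ?case using Suc sync[of m] sync[of "Suc m"] by simp
qed

text \<open>Both synchronisations see \<open>A\<close> and \<open>B\<close> change equally often.\<close>

lemma sync_lead_no_change:
  fixes A B :: "nat \<Rightarrow> bool"
  assumes sync: "stutter_index pa" "stutter_index pb" "\<And>m. A (pa m) = B (pb m)"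
    and sync': "stutter_index pa'" "stutter_index pb'" "\<And>m. A (pa' m) = B (pb' m)"
    and "pa m = r" "pa' m' = Suc r" "pb' m' \<le> pb m"
  shows "A (Suc r) = A r"
proof (rule ccontr)
  assume "A (Suc r) \<noteq> A r"
  then have "Suc (changes A r) = changes A (pa' m')" using \<open>pa' m' = Suc r\<close> by simp
  also have "\<dots> = changes B (pb' m')" by (rule changes_sync[of pa' pb' A B, OF sync'])
  also have "\<dots> \<le> changes B (pb m)" using mono_changes \<open>pb' m' \<le> pb m\<close> by (rule monoD)
  also have "\<dots> = changes A r" using changes_sync[of pa pb A B, OF sync, of m] \<open>pa m = r\<close> by simp
  finally show False by simp
qed

definition ksucc :: "('s, 'ap) kripke \<Rightarrow> 's \<Rightarrow> 's \<Rightarrow> 's" where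
  "ksucc K s t = (if krel K s t then t else (SOME t. krel K s t))"

lemma krel_ksucc: "kripke_wf K \<Longrightarrow> s \<in> kstates K \<Longrightarrow> krel K s (ksucc K s t)"
  unfolding ksucc_def kripke_wf_def by (auto intro: someI_ex)

lemma stut_kripke_mscgs:
  "init (stut (kripke_mscgs K)) = (kinit K, False)"
  "agents (stut (kripke_mscgs K)) = UNIV"
  "moves (stut (kripke_mscgs K)) = kstates K \<times> UNIV"
  "delta (stut (kripke_mscgs K)) x sig = (if snd (sig None) then (fst x, True)
       else (ksucc K (fst x) (fst (sig (Some ()))), False))"
  "stage (stut (kripke_mscgs K)) None = Suc 0"
  "stage (stut (kripke_mscgs K)) (Some y) = 0"
  "lab (stut (kripke_mscgs K)) x = Some ` klab K (fst x) \<union> (if snd x then {None} else {})"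
proof -
  have "Some ` (UNIV :: unit set) \<union> {None} = UNIV" by (simp add: UNIV_option_conv)
  then show "agents (stut (kripke_mscgs K)) = UNIV" by (simp add: stut_def kripke_mscgs_def)
qed (auto simp: stut_def kripke_mscgs_def ksucc_def split: prod.splits)

lemma is_strategy_sched_iff:
  "is_strategy (stut (kripke_mscgs K)) n None f \<longleftrightarrow>
     (\<forall>h sig. f h sig \<in> kstates K \<times> UNIV) \<and>
     (\<forall>h sig sig'. length sig = n \<longrightarrow> length sig' = n \<longrightarrow>
        (\<forall>j<n. (sig ! j) (Some ()) = (sig' ! j) (Some ())) \<longrightarrow> f h sig = f h sig')"
proof -
  have "stage (stut (kripke_mscgs K)) xi < stage (stut (kripke_mscgs K)) None \<longleftrightarrow> xi = Some ()" for xi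
    by (cases xi) (simp_all add: stut_kripke_mscgs)
  then show ?thesis by (simp add: is_strategy_def stut_kripke_mscgs)
qed

lemma hsat_stut_block_formula:
  "hsat (\<lambda>j i. lab (stut (kripke_mscgs K)) (u i ! j)) 0
      (And (map_hltl Some phi) (conj_list (map fair_formula [0..<n])))
   \<longleftrightarrow> hsat (\<lambda>j i. klab K (fst (u i ! j))) 0 phi \<and> (\<forall>j<n. \<exists>\<^sub>\<infinity>i. \<not> snd (u i ! j))"
proof -
  have "Some -` lab (stut (kripke_mscgs K)) x = klab K (fst x)" for x
    by (auto simp: stut_kripke_mscgs)
  moreover have "None \<in> lab (stut (kripke_mscgs K)) x \<longleftrightarrow> snd x" for x
    by (simp add: stut_kripke_mscgs)
  ultimately show ?thesis by (simp add: hsat_map_hltl hsat_fair_formulas del: hsat_conj_list)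
qed

lemma is_outcome_stut_kripkeI:
  fixes t :: "nat \<Rightarrow> nat \<Rightarrow> 's" and K :: "('s, 'ap) kripke"
  assumes strat: "\<forall>j<n. is_strategy (stut (kripke_mscgs K)) n None (str j None)"
    and u0: "u 0 = replicate n (kinit K, False)"
    and len: "\<And>i. length (u (Suc i)) = n"
    and t: "\<And>i j. j < n \<Longrightarrow> t i j \<in> kstates K"
    and step: "\<And>i j. j < n \<Longrightarrow> u (Suc i) ! j =
        (if snd (str j None (map u [0..<Suc i]) (map (\<lambda>j _. (t i j, False)) [0..<n]))
         then (fst (u i ! j), True) else (ksucc K (fst (u i ! j)) (t i j), False))"
  shows "is_outcome (stut (kripke_mscgs K)) (replicate n {None}) str u"
  unfolding is_outcome_def Let_def length_replicate
proof (intro conjI allI)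
  show "u 0 = replicate n (init (stut (kripke_mscgs K)))" using u0 by (simp add: stut_kripke_mscgs)
  fix i
  show "length (u (Suc i)) = n" by (rule len)
  let ?h = "map u [0..<Suc i]" and ?mv = "map (\<lambda>j _. (t i j, False)) [0..<n]"
  define sig :: "(unit option \<Rightarrow> 's \<times> bool) list"
    where "sig = map (\<lambda>j. (\<lambda>_. (t i j, False))(None := str j None ?h ?mv)) [0..<n]"
  have sched: "(sig ! j) None = str j None ?h sig" if "j < n" for j
  proof -
    have "str j None ?h ?mv = str j None ?h sig"
      using strat that unfolding is_strategy_sched_iff by (simp add: sig_def)
    then show ?thesis using that by (simp add: sig_def)
  qed
  show "\<exists>sig. length sig = n \<and>
      (\<forall>j<n. \<forall>xi\<in>agents (stut (kripke_mscgs K)). (sig ! j) xi \<in> moves (stut (kripke_mscgs K))) \<and>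
      (\<forall>j<n. u (Suc i) ! j = delta (stut (kripke_mscgs K)) (u i ! j) (sig ! j)) \<and>
      (\<forall>j<n. \<forall>xi\<in>replicate n {None} ! j. (sig ! j) xi = str j xi ?h sig)"
  proof (intro exI[of _ sig] conjI allI impI ballI)
    show "length sig = n" by (simp add: sig_def)
  next
    fix j and xi :: "unit option" assume j: "j < n"
    have "str j None ?h ?mv \<in> kstates K \<times> UNIV" using strat j by (simp add: is_strategy_sched_iff)
    then show "(sig ! j) xi \<in> moves (stut (kripke_mscgs K))"
      using t[OF j] j by (simp add: sig_def stut_kripke_mscgs)
  next
    fix j assume j: "j < n"
    show "u (Suc i) ! j = delta (stut (kripke_mscgs K)) (u i ! j) (sig ! j)"
      using step[OF j] sched[OF j] j by (simp add: stut_kripke_mscgs sig_def)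
  next
    fix j and xi :: "unit option" assume "j < n" "xi \<in> replicate n {None} ! j"
    then show "(sig ! j) xi = str j xi ?h sig" using sched by simp
  qed
qed

section \<open>From the stutter game to AHLTL\<close>

text \<open>The scheduler's decision at step \<open>i\<close> depends on the history up to \<open>i\<close>, so the run is
  built by iterating on pairs (history, positions on the paths).\<close>

lemma stutter_run_exists:
  fixes ts :: "(nat \<Rightarrow> 's) list"
    and f :: "nat \<Rightarrow> ('s \<times> bool) list list \<Rightarrow> (unit option \<Rightarrow> 's \<times> bool) list \<Rightarrow> 's \<times> bool"
  shows "\<exists>u tau. u 0 = replicate n (s0, False) \<and> (\<forall>i. length (u (Suc i)) = n) \<and>
    (\<forall>i. tau i = {j. j < n \<and> \<not> snd (f j (map u [0..<Suc i])
        (map (\<lambda>j _. ((ts ! j) (Suc (progress tau j i)), False)) [0..<n]))}) \<and>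
    (\<forall>i. \<forall>j<n. u (Suc i) ! j = ((ts ! j) (progress tau j (Suc i)), j \<notin> tau i))"
proof -
  define moves_at where
    "moves_at ps = map (\<lambda>j (_ :: unit option). ((ts ! j) (Suc (ps ! j)), False)) [0..<n]" for ps
  define stays where "stays h ps j = snd (f j h (moves_at ps))" for h ps j
  define next_pos where "next_pos h ps = map (\<lambda>j. if stays h ps j then ps ! j else Suc (ps ! j)) [0..<n]"
    for h ps
  define step where "step = (\<lambda>(h, ps).
      (h @ [map (\<lambda>j. ((ts ! j) (next_pos h ps ! j), stays h ps j)) [0..<n]], next_pos h ps))"
  define run where "run i = (step ^^ i) ([replicate n (s0, False)], replicate n 0)" for i
  define u where "u i = last (fst (run i))" for i
  define tau where "tau i = {j. j < n \<and> \<not> stays (fst (run i)) (snd (run i)) j}" for i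
  have run_Suc: "run (Suc i) = step (run i)" for i by (simp add: run_def)
  have hist: "fst (run i) = map u [0..<Suc i]" for i
  proof (induction i)
    case (Suc i)
    have "fst (run (Suc i)) = fst (run i) @ [u (Suc i)]"
      by (simp add: u_def run_Suc step_def split: prod.splits)
    then show ?case using Suc by simp
  qed (simp add: u_def run_def)
  have pos: "snd (run i) ! j = progress tau j i" if "j < n" for i j
  proof (induction i)
    case (Suc i)
    have "snd (run (Suc i)) ! j =
        (if stays (fst (run i)) (snd (run i)) j then snd (run i) ! j else Suc (snd (run i) ! j))"
      using that by (simp add: run_Suc step_def next_pos_def split: prod.splits)
    then show ?case using Suc that by (simp add: tau_def progress_Suc)
  qed (use that in \<open>simp add: run_def\<close>)
  have "moves_at (snd (run i)) = map (\<lambda>j _. ((ts ! j) (Suc (progress tau j i)), False)) [0..<n]" for i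
    unfolding moves_at_def by (rule map_cong) (auto simp: pos)
  then have "\<forall>i. tau i = {j. j < n \<and> \<not> snd (f j (map u [0..<Suc i])
      (map (\<lambda>j _. ((ts ! j) (Suc (progress tau j i)), False)) [0..<n]))}"
    by (simp add: tau_def stays_def hist)
  moreover have "u (Suc i) ! j = ((ts ! j) (progress tau j (Suc i)), j \<notin> tau i)" if "j < n" for i j
    using that pos[of j "Suc i"] by (simp add: u_def run_Suc step_def tau_def split: prod.splits)
  then have "\<forall>i. \<forall>j<n. u (Suc i) ! j = ((ts ! j) (progress tau j (Suc i)), j \<notin> tau i)" by blast
  moreover have "u 0 = replicate n (s0, False)" by (simp add: u_def run_def)
  moreover have "\<forall>i. length (u (Suc i)) = n" by (simp add: u_def run_Suc step_def split: prod.splits)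
  ultimately show ?thesis by (intro exI[of _ u] exI[of _ tau] conjI)
qed

lemma outcome_along_paths:
  fixes ts :: "(nat \<Rightarrow> 's) list" and K :: "('s, 'ap) kripke"
  assumes wf: "kripke_wf K" and paths: "\<forall>j<n. kpath K (ts ! j)"
    and strat: "\<forall>j<n. is_strategy (stut (kripke_mscgs K)) n None (str j None)"
  shows "\<exists>u tau. is_outcome (stut (kripke_mscgs K)) (replicate n {None}) str u \<and> (\<forall>i. tau i \<subseteq> {..<n}) \<and>
     (\<forall>i. \<forall>j<n. fst (u i ! j) = (ts ! j) (progress tau j i) \<and> snd (u (Suc i) ! j) = (j \<notin> tau i))"
proof -
  obtain u tau where u_0: "u 0 = replicate n (kinit K, False)" and len_all: "\<forall>i. length (u (Suc i)) = n"
    and tau_all: "\<forall>i. tau i = {j. j < n \<and> \<not> snd (str j None (map u [0..<Suc i])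
      (map (\<lambda>j _. ((ts ! j) (Suc (progress tau j i)), False)) [0..<n]))}"
    and u_Suc_all: "\<forall>i. \<forall>j<n. u (Suc i) ! j = ((ts ! j) (progress tau j (Suc i)), j \<notin> tau i)"
    using stutter_run_exists[of n "kinit K" "\<lambda>j. str j None" ts] by (elim exE conjE) (rule that)
  note len = len_all[rule_format] and tau = tau_all[rule_format] and u_Suc = u_Suc_all[rule_format]
  let ?t = "\<lambda>i j. (ts ! j) (Suc (progress tau j i))"
  have state: "fst (u i ! j) = (ts ! j) (progress tau j i)" if "j < n" for i j
  proof (cases i)
    case 0 then show ?thesis using paths that by (simp add: u_0 kpath_def)
  qed (simp add: u_Suc that)
  have "is_outcome (stut (kripke_mscgs K)) (replicate n {None}) str u"
  proof (rule is_outcome_stut_kripkeI[where t = ?t and str = str and u = u, OF strat u_0 len])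
    show "?t i j \<in> kstates K" if "j < n" for i j using kpath_kstates[OF wf] paths that by blast
    fix i j assume j: "j < n"
    have "krel K ((ts ! j) (progress tau j i)) (?t i j)" using paths j by (simp add: kpath_def)
    then have "ksucc K (fst (u i ! j)) (?t i j) = ?t i j" using j by (simp add: state ksucc_def)
    then show "u (Suc i) ! j = (if snd (str j None (map u [0..<Suc i]) (map (\<lambda>j _. (?t i j, False)) [0..<n]))
        then (fst (u i ! j), True) else (ksucc K (fst (u i ! j)) (?t i j), False))"
      using j tau[of i] by (simp add: u_Suc state progress_Suc)
  qed
  moreover have "tau i \<subseteq> {..<n}" for i by (auto simp: tau)
  ultimately show ?thesis using state u_Suc by (intro exI[of _ u] exI[of _ tau]) simp
qed

lemma stut_block_imp_ahltl:
  fixes K :: "('s, 'ap) kripke"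
  assumes wf: "kripke_wf K" and vars: "vars phi \<subseteq> {..<n}"
    and block: "hyperatl_block (stut (kripke_mscgs K)) (replicate n {None})
      (And (map_hltl Some phi) (conj_list (map fair_formula [0..<n])))"
  shows "ahltl_sat K n phi"
  unfolding ahltl_sat_def
proof (intro allI impI)
  fix ts :: "(nat \<Rightarrow> 's) list" assume paths: "\<forall>j<n. kpath K (ts ! j)"
  obtain str where strat: "\<forall>j<n. is_strategy (stut (kripke_mscgs K)) n None (str j None)"
    and win: "\<And>u. is_outcome (stut (kripke_mscgs K)) (replicate n {None}) str u \<Longrightarrow>
      hsat (\<lambda>j i. lab (stut (kripke_mscgs K)) (u i ! j)) 0
        (And (map_hltl Some phi) (conj_list (map fair_formula [0..<n])))"
    using block unfolding hyperatl_block_def by auto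
  obtain u tau where outcome: "is_outcome (stut (kripke_mscgs K)) (replicate n {None}) str u"
    and tau: "\<forall>i. tau i \<subseteq> {..<n}"
    and along: "\<forall>i. \<forall>j<n. fst (u i ! j) = (ts ! j) (progress tau j i) \<and> snd (u (Suc i) ! j) = (j \<notin> tau i)"
    using outcome_along_paths[where str = str, OF wf paths strat] by blast
  have phi: "hsat (\<lambda>j i. klab K (fst (u i ! j))) 0 phi" and fair: "\<forall>j<n. \<exists>\<^sub>\<infinity>i. \<not> snd (u i ! j)"
    using win[OF outcome] unfolding hsat_stut_block_formula by blast+
  have "fair_traj n tau"
    unfolding fair_traj_def
  proof (intro conjI allI impI)
    show "tau m \<subseteq> {..<n}" for m using tau by blast
    fix j assume j: "j < n"
    have "\<exists>\<^sub>\<infinity>i. \<not> snd (u (Suc i) ! j)" using fair j INFM_Suc_iff[of "\<lambda>i. \<not> snd (u i ! j)"] by simp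
    then show "\<exists>\<^sub>\<infinity>m. j \<in> tau m" using along j by simp
  qed
  moreover have "hsat (\<lambda>j m. klab K ((ts ! j) (progress tau j m))) 0 phi"
  proof -
    have "hsat (\<lambda>j i. klab K (fst (u i ! j))) 0 phi = hsat (\<lambda>j m. klab K ((ts ! j) (progress tau j m))) 0 phi"
      by (rule hsat_cong) (use vars along in auto)
    then show ?thesis using phi by simp
  qed
  ultimately show "\<exists>tau. fair_traj n tau \<and> hsat (\<lambda>j m. klab K ((ts ! j) (progress tau j m))) 0 phi"
    by blast
qed

section \<open>Consistent advances and the greedy scheduler\<close>

text \<open>A triple \<open>(a, x, y) \<in> E\<close> stands for the constraint \<open>a\<^sub>\<pi>\<^sub>x \<leftrightarrow> a\<^sub>\<pi>\<^sub>y\<close>; a configuration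
  assigns a state to every copy.\<close>

definition consistent :: "('ap \<times> nat \<times> nat) set \<Rightarrow> ('s, 'ap) kripke \<Rightarrow> (nat \<Rightarrow> 's) \<Rightarrow> bool" where
  "consistent E K c \<longleftrightarrow> (\<forall>(a, x, y)\<in>E. a \<in> klab K (c x) \<longleftrightarrow> a \<in> klab K (c y))"

definition advance :: "nat set \<Rightarrow> (nat \<Rightarrow> 's) \<Rightarrow> (nat \<Rightarrow> 's) \<Rightarrow> nat \<Rightarrow> 's" where
  "advance S c c' k = (if k \<in> S then c' k else c k)"

definition max_advance ::
  "('ap \<times> nat \<times> nat) set \<Rightarrow> ('s, 'ap) kripke \<Rightarrow> (nat \<Rightarrow> 's) \<Rightarrow> (nat \<Rightarrow> 's) \<Rightarrow> nat set" where
  "max_advance E K c c' = \<Union>{S. consistent E K (advance S c c')}"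

lemma consistent_cong:
  "\<forall>(a, x, y)\<in>E. x < n \<and> y < n \<Longrightarrow> (\<And>j. j < n \<Longrightarrow> c j = c' j) \<Longrightarrow> consistent E K c = consistent E K c'"
  unfolding consistent_def by fastforce

text \<open>Since a constraint only relates two copies, any two consistent advances from a consistent
  configuration can be merged; hence the union of all of them is again consistent.\<close>

lemma consistent_max_advance:
  assumes c: "consistent E K c"
  shows "consistent E K (advance (max_advance E K c c') c c')"
  unfolding consistent_def
proof (clarify)
  fix a x y assume e: "(a, x, y) \<in> E"
  let ?L = "\<lambda>s. a \<in> klab K s" and ?S = "max_advance E K c c'"
  have agree: "?L (advance S c c' x) = ?L (advance S c c' y)" if "consistent E K (advance S c c')" for S
    using that e by (auto simp: consistent_def)
  have base: "?L (c x) = ?L (c y)" using c e by (auto simp: consistent_def)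
  have witness: "\<exists>S. consistent E K (advance S c c') \<and> k \<in> S \<and> S \<subseteq> ?S" if "k \<in> ?S" for k
    using that by (auto simp: max_advance_def)
  show "?L (advance ?S c c' x) = ?L (advance ?S c c' y)"
  proof (cases "x \<in> ?S"; cases "y \<in> ?S")
    assume "x \<in> ?S" "y \<in> ?S"
    with witness obtain S1 S2 where "consistent E K (advance S1 c c')" "x \<in> S1"
      "consistent E K (advance S2 c c')" "y \<in> S2" by blast
    with agree[of S1] agree[of S2] base \<open>x \<in> ?S\<close> \<open>y \<in> ?S\<close> show ?thesis
      by (auto simp: advance_def split: if_splits)
  next
    assume "x \<in> ?S" "y \<notin> ?S"
    with witness obtain S where "consistent E K (advance S c c')" "x \<in> S" "y \<notin> S" by blast
    with agree[of S] \<open>x \<in> ?S\<close> \<open>y \<notin> ?S\<close> show ?thesis by (simp add: advance_def)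
  next
    assume "x \<notin> ?S" "y \<in> ?S"
    with witness obtain S where "consistent E K (advance S c c')" "y \<in> S" "x \<notin> S" by blast
    with agree[of S] \<open>x \<notin> ?S\<close> \<open>y \<in> ?S\<close> show ?thesis by (simp add: advance_def)
  next
    assume "x \<notin> ?S" "y \<notin> ?S"
    with base show ?thesis by (simp add: advance_def)
  qed
qed

text \<open>\<open>cur m j\<close> is the state of copy \<open>j\<close> at time \<open>m\<close> and \<open>nxt m j\<close> the successor proposed by its
  Kripke agent; \<open>tau m\<close> is the set of copies advanced at time \<open>m\<close>.\<close>

definition greedy_run :: "('ap \<times> nat \<times> nat) set \<Rightarrow> ('s, 'ap) kripke \<Rightarrow> nat \<Rightarrow>
    (nat \<Rightarrow> nat \<Rightarrow> 's) \<Rightarrow> (nat \<Rightarrow> nat \<Rightarrow> 's) \<Rightarrow> (nat \<Rightarrow> nat set) \<Rightarrow> bool" where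
  "greedy_run E K n cur nxt tau \<longleftrightarrow>
     (\<forall>j<n. cur 0 j = kinit K) \<and>
     (\<forall>m. tau m = {j. j < n \<and> j \<in> max_advance E K (cur m) (nxt m)}) \<and>
     (\<forall>m. \<forall>j<n. cur (Suc m) j = (if j \<in> tau m then nxt m j else cur m j) \<and> krel K (cur m j) (nxt m j))"

definition sync_achievable :: "('ap \<times> nat \<times> nat) set \<Rightarrow> ('s, 'ap) kripke \<Rightarrow> nat \<Rightarrow> bool" where
  "sync_achievable E K n \<longleftrightarrow>
     (\<forall>y. (\<forall>j<n. kpath K (y j)) \<longrightarrow>
        (\<exists>tau. fair_traj n tau \<and> (\<forall>m. consistent E K (\<lambda>j. y j (progress tau j m)))))"

lemma greedy_run_consistent:
  assumes En: "\<forall>(a, x, y)\<in>E. x < n \<and> y < n" and run: "greedy_run E K n cur nxt tau"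
  shows "consistent E K (cur m)"
proof (induction m)
  case 0 then show ?case using En run by (fastforce simp: consistent_def greedy_run_def)
next
  case (Suc m)
  have "cur (Suc m) j = advance (max_advance E K (cur m) (nxt m)) (cur m) (nxt m) j" if "j < n" for j
    using run that by (simp add: greedy_run_def advance_def)
  then show ?case using consistent_max_advance[OF Suc] consistent_cong[OF En] by blast
qed

lemma greedy_run_paths:
  assumes wf: "kripke_wf K" and run: "greedy_run E K n cur nxt tau"
    and stuck: "\<And>j m. j \<in> J \<Longrightarrow> T \<le> m \<Longrightarrow> j \<notin> tau m"
    and moving: "\<And>j. j < n \<Longrightarrow> j \<notin> J \<Longrightarrow> \<exists>\<^sub>\<infinity>m. j \<in> tau m"
  shows "\<exists>y. \<forall>j<n. kpath K (y j) \<and> (\<forall>m. cur m j = y j (progress tau j m)) \<and>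
    (j \<in> J \<longrightarrow> y j (Suc (progress tau j T)) = nxt T j)"
proof -
  have "\<exists>yj. kpath K yj \<and> (\<forall>m. cur m j = yj (progress tau j m)) \<and>
      (j \<in> J \<longrightarrow> yj (Suc (progress tau j T)) = nxt T j)" if j: "j < n" for j
  proof -
    have z0: "cur 0 j = kinit K" and zS: "\<And>m. cur (Suc m) j = (if j \<in> tau m then nxt m j else cur m j)"
      and kr: "\<And>m. krel K (cur m j) (nxt m j)"
      using run j by (simp_all add: greedy_run_def)
    show ?thesis
    proof (cases "j \<in> J")
      case True
      then show ?thesis
        using kpath_along_stuck_progress[where z = "\<lambda>m. cur m j", OF wf z0 zS kr] stuck by blast
    next
      case False
      then show ?thesis using kpath_along_progress[where z = "\<lambda>m. cur m j", OF z0 zS kr] moving j by blast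
    qed
  qed
  then show ?thesis by (metis (no_types, lifting) bchoice lessThan_iff)
qed

lemma first_overtaking:
  assumes p: "\<And>j. j \<in> J \<Longrightarrow> stutter_index (p j)" and j0: "j0 \<in> J" "b j0 < p j0 m0"
  obtains M X where "X \<subseteq> J" "X \<noteq> {}" "\<And>j. j \<in> X \<Longrightarrow> p j (Suc M) = Suc (b j)"
    "\<And>j. j \<in> J \<Longrightarrow> j \<notin> X \<Longrightarrow> p j (Suc M) \<le> b j"
proof -
  obtain k where "m0 = Suc k" using p[OF j0(1)] j0(2) by (cases m0) (auto simp: stutter_index_def)
  then have ex: "\<exists>m. \<exists>j\<in>J. b j < p j (Suc m)" using j0 by blast
  define M where "M = (LEAST m. \<exists>j\<in>J. b j < p j (Suc m))"
  define X where "X = {j \<in> J. b j < p j (Suc M)}"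
  have "X \<noteq> {}" using LeastI_ex[OF ex] by (auto simp: X_def M_def)
  have before: "p j M \<le> b j" if "j \<in> J" for j
  proof (cases M)
    case 0 then show ?thesis using p[OF that] by (simp add: stutter_index_def)
  next
    case (Suc k)
    then have "\<not> (\<exists>j\<in>J. b j < p j (Suc k))"
      using not_less_Least[of k "\<lambda>m. \<exists>j\<in>J. b j < p j (Suc m)"] by (simp add: M_def)
    then show ?thesis using that Suc by (simp add: not_less)
  qed
  show thesis
  proof (rule that[of X M])
    show "X \<subseteq> J" by (auto simp: X_def)
    show "X \<noteq> {}" by fact
    show "p j (Suc M) \<le> b j" if "j \<in> J" "j \<notin> X" for j using that by (simp add: X_def)
    fix j assume "j \<in> X"
    then have "b j < p j (Suc M)" "p j M \<le> b j" "p j (Suc M) = p j M \<or> p j (Suc M) = Suc (p j M)"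
      using before p unfolding X_def stutter_index_def by auto
    then show "p j (Suc M) = Suc (b j)" by linarith
  qed
qed

lemma consistent_overtaking_advance:
  fixes y :: "nat \<Rightarrow> nat \<Rightarrow> 's" and K :: "('s, 'ap) kripke"
  assumes En: "\<forall>(a, x, z)\<in>E. x < n \<and> z < n"
    and pos: "\<And>j. stutter_index (pos j)" and pos': "\<And>j. stutter_index (pos' j)"
    and sync: "\<And>m. consistent E K (\<lambda>j. y j (pos j m))"
    and sync': "\<And>m. consistent E K (\<lambda>j. y j (pos' j m))"
    and stuck: "\<And>j m. j \<in> J \<Longrightarrow> T \<le> m \<Longrightarrow> pos j m = pos j T"
    and moving: "\<And>j. j < n \<Longrightarrow> j \<notin> J \<Longrightarrow> surj (pos j)"
    and X: "X \<subseteq> J" and Xpos: "\<And>j. j \<in> X \<Longrightarrow> pos' j M = Suc (pos j T)"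
    and Jpos: "\<And>j. j \<in> J \<Longrightarrow> j \<notin> X \<Longrightarrow> pos' j M \<le> pos j T"
  shows "consistent E K (\<lambda>j. y j (if j \<in> X then Suc (pos j T) else pos j T))"
proof -
  let ?L = "\<lambda>a j r. a \<in> klab K (y j r)"
  have sync_pos: "?L a x (pos x m) = ?L a z (pos z m)"
    if "(a, x, z) \<in> E \<or> (a, z, x) \<in> E" for a x z m
    using that sync[of m] unfolding consistent_def by blast
  have sync_pos': "?L a x (pos' x m) = ?L a z (pos' z m)"
    if "(a, x, z) \<in> E \<or> (a, z, x) \<in> E" for a x z m
    using that sync'[of m] unfolding consistent_def by blast
  have no_change: "?L a k (Suc (pos k T)) = ?L a k (pos k T)"
    if k: "k \<in> X" and l: "l < n" "l \<notin> X" and e: "(a, k, l) \<in> E \<or> (a, l, k) \<in> E" for k l a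
  proof -
    obtain m where m: "T \<le> m" "pos' l M \<le> pos l m"
    proof (cases "l \<in> J")
      case True then show ?thesis using that[of T] Jpos l by simp
    next
      case False
      obtain m0 where "pos' l M = pos l m0" using surjD[OF moving[OF l(1) False]] by blast
      then show ?thesis
        using that[of "max m0 T"] monoD[OF stutter_index_mono[OF pos], of m0 "max m0 T"] by simp
    qed
    have "pos k m = pos k T" using stuck k X m(1) by blast
    then show ?thesis
      by (intro sync_lead_no_change[of "pos k" "pos l" "?L a k" "?L a l" "pos' k" "pos' l" m "pos k T" M])
        (use pos pos' sync_pos[OF e] sync_pos'[OF e] Xpos[OF k] m(2) in auto)
  qed
  show ?thesis
    unfolding consistent_def
  proof clarify
    fix a x z assume e: "(a, x, z) \<in> E"
    then have "x < n" "z < n" using En by auto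
    then show "?L a x (if x \<in> X then Suc (pos x T) else pos x T) = ?L a z (if z \<in> X then Suc (pos z T) else pos z T)"
      using sync_pos'[of a x z M] sync_pos[of a x z T]
        no_change[of x z a] no_change[of z x a] Xpos[of x] Xpos[of z] e by auto
  qed
qed

lemma greedy_run_fair:
  assumes wf: "kripke_wf K" and En: "\<forall>(a, x, z)\<in>E. x < n \<and> z < n"
    and sync: "sync_achievable E K n" and run: "greedy_run E K n cur nxt tau"
  shows "\<forall>j<n. \<exists>\<^sub>\<infinity>m. j \<in> tau m"
proof (rule ccontr)
  assume "\<not> (\<forall>j<n. \<exists>\<^sub>\<infinity>m. j \<in> tau m)"
  define J where "J = {j. j < n \<and> \<not> (\<exists>\<^sub>\<infinity>m. j \<in> tau m)}"
  obtain j0 where j0: "j0 \<in> J" using \<open>\<not> (\<forall>j<n. _)\<close> by (auto simp: J_def)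
  have "MOST m. \<forall>j\<in>J. j \<notin> tau m" by (rule eventually_ball_finite) (auto simp: J_def)
  then obtain T where stuck: "\<And>j m. j \<in> J \<Longrightarrow> T \<le> m \<Longrightarrow> j \<notin> tau m" by (auto simp: MOST_nat_le)
  have moving: "\<And>j. j < n \<Longrightarrow> j \<notin> J \<Longrightarrow> \<exists>\<^sub>\<infinity>m. j \<in> tau m" by (simp add: J_def)
  let ?pos = "\<lambda>j. progress tau j"
  obtain y where y: "\<forall>j<n. kpath K (y j) \<and> (\<forall>m. cur m j = y j (?pos j m)) \<and>
      (j \<in> J \<longrightarrow> y j (Suc (?pos j T)) = nxt T j)"
    using greedy_run_paths[OF wf run, of J T, OF stuck moving] by blast
  then have y_path: "\<And>j. j < n \<Longrightarrow> kpath K (y j)"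
    and cur_y: "\<And>j m. j < n \<Longrightarrow> cur m j = y j (?pos j m)"
    and y_nxt: "\<And>j. j < n \<Longrightarrow> j \<in> J \<Longrightarrow> y j (Suc (?pos j T)) = nxt T j"
    by simp_all
  obtain tau' where fair': "fair_traj n tau'" and sync': "\<And>m. consistent E K (\<lambda>j. y j (progress tau' j m))"
    using sync y_path unfolding sync_achievable_def by blast
  have "j0 < n" using j0 by (simp add: J_def)
  then have "surj (progress tau' j0)" using fair' progress_surj by (simp add: fair_traj_def)
  then obtain m0 where "Suc (?pos j0 T) = progress tau' j0 m0" using surjD by metis
  then have overtake: "?pos j0 T < progress tau' j0 m0" by simp
  obtain M X where X: "X \<subseteq> J" "X \<noteq> {}"
    and Xpos: "\<And>j. j \<in> X \<Longrightarrow> progress tau' j (Suc M) = Suc (?pos j T)"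
    and Jpos: "\<And>j. j \<in> J \<Longrightarrow> j \<notin> X \<Longrightarrow> progress tau' j (Suc M) \<le> ?pos j T"
    by (rule first_overtaking[of J "progress tau'" j0 "\<lambda>j. ?pos j T" m0, OF stutter_index_progress j0 overtake]) blast
  have "consistent E K (\<lambda>j. y j (if j \<in> X then Suc (?pos j T) else ?pos j T))"
  proof (rule consistent_overtaking_advance[where pos = ?pos and pos' = "progress tau'" and y = y,
        OF En stutter_index_progress stutter_index_progress _ sync' _ _ X(1) Xpos Jpos])
    show "consistent E K (\<lambda>j. y j (?pos j m))" for m
      using greedy_run_consistent[OF En run, of m] consistent_cong[OF En, of "cur m"] cur_y by simp
    show "?pos j m = ?pos j T" if "j \<in> J" "T \<le> m" for j m
      using progress_const_after[of T j tau m] stuck that by blast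
    show "surj (?pos j)" if "j < n" "j \<notin> J" for j using progress_surj that by (simp add: J_def)
  qed
  moreover have "advance X (cur T) (nxt T) j = y j (if j \<in> X then Suc (?pos j T) else ?pos j T)"
    if "j < n" for j using cur_y y_nxt X that by (auto simp: advance_def)
  ultimately have "consistent E K (advance X (cur T) (nxt T))"
    using consistent_cong[OF En, of "advance X (cur T) (nxt T)"] by simp
  then have "X \<subseteq> max_advance E K (cur T) (nxt T)" by (auto simp: max_advance_def)
  moreover have "J \<subseteq> {..<n}" by (auto simp: J_def)
  ultimately have "X \<subseteq> tau T" using run X by (auto simp: greedy_run_def)
  then show False using X stuck by blast
qed

section \<open>From AHLTL to the stutter game\<close>

definition agree_constraints :: "'a hltl list \<Rightarrow> ('a \<times> nat \<times> nat) set" where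
  "agree_constraints cs = {(a, x, y). \<exists>as. agree_formula as x y \<in> set cs \<and> a \<in> set as}"

lemma agree_constraints_bound:
  assumes "\<forall>c\<in>set cs. vars c \<subseteq> {..<n}" shows "\<forall>(a, x, y)\<in>agree_constraints cs. x < n \<and> y < n"
  unfolding agree_constraints_def
proof clarify
  fix a x y as assume "agree_formula as x y \<in> set cs" "a \<in> set as"
  then have "{x, y} \<subseteq> {..<n}" using assms vars_agree_formula[of a as x y] by blast
  then show "x < n \<and> y < n" by simp
qed

lemma hsat_agree_constraints:
  assumes "hsat w 0 (conj_list cs)" and "(a, x, y) \<in> agree_constraints cs"
  shows "a \<in> w x m \<longleftrightarrow> a \<in> w y m"
proof -
  obtain as where "agree_formula as x y \<in> set cs" "a \<in> set as"
    using assms(2) by (auto simp: agree_constraints_def)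
  moreover from this(1) have "hsat w 0 (agree_formula as x y)" using assms(1) by simp
  ultimately show ?thesis unfolding hsat_agree_formula by blast
qed

lemma sync_achievable_of_ahltl:
  assumes vars: "\<forall>c\<in>set cs. vars c \<subseteq> {..<n}" and sat: "ahltl_sat K n (conj_list cs)"
  shows "sync_achievable (agree_constraints cs) K n"
  unfolding sync_achievable_def
proof (intro allI impI)
  fix y assume "\<forall>j<n. kpath K (y j)"
  then have "length (map y [0..<n]) = n" "\<forall>j<n. kpath K (map y [0..<n] ! j)" by simp_all
  then obtain tau where fair: "fair_traj n tau"
    and phi: "hsat (\<lambda>j m. klab K ((map y [0..<n] ! j) (progress tau j m))) 0 (conj_list cs)"
    using sat unfolding ahltl_sat_def by blast
  have "consistent (agree_constraints cs) K (\<lambda>j. y j (progress tau j m))" for m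
    unfolding consistent_def
  proof clarify
    fix a x z assume e: "(a, x, z) \<in> agree_constraints cs"
    then have "x < n" "z < n" using agree_constraints_bound[OF vars] by auto
    then show "a \<in> klab K (y x (progress tau x m)) \<longleftrightarrow> a \<in> klab K (y z (progress tau z m))"
      using hsat_agree_constraints[OF phi e, of m] by simp
  qed
  then show "\<exists>tau. fair_traj n tau \<and> (\<forall>m. consistent (agree_constraints cs) K (\<lambda>j. y j (progress tau j m)))"
    using fair by blast
qed

lemma hsat_conj_transfer:
  assumes cs: "\<forall>c\<in>set cs. eq_formula c \<or> stutter_inv_single c"
    and vars: "\<forall>c\<in>set cs. vars c \<subseteq> {..<n}"
    and stut: "\<And>k. k < n \<Longrightarrow> stutter_equiv (w k) (w' k)"
    and agree: "\<And>a x y m. (a, x, y) \<in> agree_constraints cs \<Longrightarrow> a \<in> w x m \<longleftrightarrow> a \<in> w y m"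
    and sat: "hsat w' 0 (conj_list cs)"
  shows "hsat w 0 (conj_list cs)"
  unfolding hsat_conj_list
proof
  fix c assume c: "c \<in> set cs"
  then have sat_c: "hsat w' 0 c" using sat by simp
  from cs c consider "eq_formula c" | "stutter_inv_single c" by blast
  then show "hsat w 0 c"
  proof cases
    case 1
    then obtain as x y where c_def: "c = agree_formula as x y" by (auto simp: eq_formula_iff)
    then have "(a, x, y) \<in> agree_constraints cs" if "a \<in> set as" for a
      using c that by (auto simp: agree_constraints_def)
    then show ?thesis using agree unfolding c_def hsat_agree_formula by blast
  next
    case 2
    then obtain k where k: "vars c \<subseteq> {k}"
      and inv: "\<forall>w w'. stutter_equiv (w k) (w' k) \<longrightarrow> (hsat w 0 c \<longleftrightarrow> hsat w' 0 c)"
      unfolding stutter_inv_single_def by blast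
    show ?thesis
    proof (cases "k < n")
      case True then show ?thesis using inv stut sat_c by blast
    next
      case False
      then have "vars c = {}" using k vars c by fastforce
      then show ?thesis using sat_c hsat_cong[of c w w'] by simp
    qed
  qed
qed

definition greedy_sched :: "('ap \<times> nat \<times> nat) set \<Rightarrow> ('s, 'ap) kripke \<Rightarrow> nat \<Rightarrow> nat \<Rightarrow>
    ('s \<times> bool) list list \<Rightarrow> (unit option \<Rightarrow> 's \<times> bool) list \<Rightarrow> 's \<times> bool" where
  "greedy_sched E K n j h sig = (kinit K, j \<notin> max_advance E K (\<lambda>k. fst (last h ! k))
      (\<lambda>k. if k < n then ksucc K (fst (last h ! k)) (fst ((sig ! k) (Some ()))) else kinit K))"

lemma is_strategy_greedy_sched:
  fixes K :: "('s, 'ap) kripke"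
  shows "kripke_wf K \<Longrightarrow> is_strategy (stut (kripke_mscgs K)) n None (greedy_sched E K n j)"
  unfolding is_strategy_sched_iff
proof (intro conjI allI impI)
  fix h :: "('s \<times> bool) list list" and sig sig' :: "(unit option \<Rightarrow> 's \<times> bool) list"
  assume "length sig = n" "length sig' = n"
    and "\<forall>j<n. (sig ! j) (Some ()) = (sig' ! j) (Some ())"
  then have "(\<lambda>k. if k < n then ksucc K (fst (last h ! k)) (fst ((sig ! k) (Some ()))) else kinit K) =
      (\<lambda>k. if k < n then ksucc K (fst (last h ! k)) (fst ((sig' ! k) (Some ()))) else kinit K)"
    by auto
  then show "greedy_sched E K n j h sig = greedy_sched E K n j h sig'"
    unfolding greedy_sched_def by simp
qed (auto simp: greedy_sched_def kripke_wf_def)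

lemma greedy_sched_outcome:
  fixes K :: "('s, 'ap) kripke"
  assumes wf: "kripke_wf K"
    and outcome: "is_outcome (stut (kripke_mscgs K)) (replicate n {None}) (\<lambda>j _. greedy_sched E K n j) u"
  shows "\<exists>nxt tau. greedy_run E K n (\<lambda>m j. fst (u m ! j)) nxt tau \<and>
    (\<forall>m. \<forall>j<n. snd (u (Suc m) ! j) = (j \<notin> tau m))"
proof -
  let ?cur = "\<lambda>m j. fst (u m ! j)"
  have u0: "u 0 = replicate n (kinit K, False)"
    using outcome by (simp add: is_outcome_def stut_kripke_mscgs)
  have "\<forall>m. \<exists>sig. (\<forall>j<n. u (Suc m) ! j = delta (stut (kripke_mscgs K)) (u m ! j) (sig ! j)) \<and>
      (\<forall>j<n. (sig ! j) None = greedy_sched E K n j (map u [0..<Suc m]) sig)"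
    using outcome unfolding is_outcome_def Let_def by fastforce
  then obtain sig where step: "\<And>m j. j < n \<Longrightarrow> u (Suc m) ! j = delta (stut (kripke_mscgs K)) (u m ! j) (sig m ! j)"
    and sched: "\<And>m j. j < n \<Longrightarrow> (sig m ! j) None = greedy_sched E K n j (map u [0..<Suc m]) (sig m)"
    by metis
  define nxt where "nxt m k = (if k < n then ksucc K (?cur m k) (fst ((sig m ! k) (Some ()))) else kinit K)"
    for m k
  define tau where "tau m = {j. j < n \<and> j \<in> max_advance E K (?cur m) (nxt m)}" for m
  have u_Suc: "u (Suc m) ! j = (if j \<in> tau m then (nxt m j, False) else (?cur m j, True))"
    if "j < n" for m j
  proof -
    have last_u: "last (map u [0..<Suc m]) = u m" by simp
    have "(\<lambda>k. if k < n then ksucc K (?cur m k) (fst ((sig m ! k) (Some ()))) else kinit K) = nxt m"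
      by (simp add: nxt_def fun_eq_iff)
    then have "greedy_sched E K n j (map u [0..<Suc m]) (sig m) = (kinit K, j \<notin> max_advance E K (?cur m) (nxt m))"
      unfolding greedy_sched_def last_u by simp
    then have "snd ((sig m ! j) None) = (j \<notin> tau m)" using sched[OF that] that by (simp add: tau_def)
    then show ?thesis using step[OF that] that by (simp add: stut_kripke_mscgs nxt_def)
  qed
  have states: "?cur m j \<in> kstates K" if "j < n" for m j
  proof (induction m)
    case 0 then show ?case using wf that by (simp add: u0 kripke_wf_def)
  next
    case (Suc m)
    then have "krel K (?cur m j) (nxt m j)" using krel_ksucc[OF wf] that by (simp add: nxt_def)
    then show ?case using Suc krel_kstates[OF wf] that by (simp add: u_Suc)
  qed
  have "greedy_run E K n ?cur nxt tau"
    unfolding greedy_run_def using u0 u_Suc states krel_ksucc[OF wf] by (simp add: tau_def nxt_def)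
  then show ?thesis using u_Suc by auto
qed

lemma greedy_outcome_wins:
  fixes K :: "('s, 'ap) kripke"
  assumes wf: "kripke_wf K" and cs: "\<forall>c\<in>set cs. eq_formula c \<or> stutter_inv_single c"
    and vars: "\<forall>c\<in>set cs. vars c \<subseteq> {..<n}" and sat: "ahltl_sat K n (conj_list cs)"
    and outcome: "is_outcome (stut (kripke_mscgs K)) (replicate n {None})
      (\<lambda>j _. greedy_sched (agree_constraints cs) K n j) u"
  shows "hsat (\<lambda>j i. klab K (fst (u i ! j))) 0 (conj_list cs) \<and> (\<forall>j<n. \<exists>\<^sub>\<infinity>i. \<not> snd (u i ! j))"
proof
  note En = agree_constraints_bound[OF vars]
  obtain nxt tau where run: "greedy_run (agree_constraints cs) K n (\<lambda>m j. fst (u m ! j)) nxt tau"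
    and bit: "\<forall>m. \<forall>j<n. snd (u (Suc m) ! j) = (j \<notin> tau m)"
    using greedy_sched_outcome[OF wf outcome] by blast
  have fair: "\<forall>j<n. \<exists>\<^sub>\<infinity>m. j \<in> tau m"
    by (rule greedy_run_fair[OF wf En sync_achievable_of_ahltl[OF vars sat] run])
  show "\<forall>j<n. \<exists>\<^sub>\<infinity>i. \<not> snd (u i ! j)"
  proof (intro allI impI)
    fix j assume "j < n"
    then have "\<exists>\<^sub>\<infinity>i. \<not> snd (u (Suc i) ! j)" using fair bit by simp
    then show "\<exists>\<^sub>\<infinity>i. \<not> snd (u i ! j)" using INFM_Suc_iff[of "\<lambda>i. \<not> snd (u i ! j)"] by simp
  qed
  have "\<exists>y. \<forall>j<n. kpath K (y j) \<and> (\<forall>m. fst (u m ! j) = y j (progress tau j m)) \<and>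
      (j \<in> {} \<longrightarrow> y j (Suc (progress tau j 0)) = nxt 0 j)"
    by (rule greedy_run_paths[OF wf run]) (use fair in simp_all)
  then obtain y where y_path: "\<And>j. j < n \<Longrightarrow> kpath K (y j)"
    and cur_y: "\<And>j m. j < n \<Longrightarrow> fst (u m ! j) = y j (progress tau j m)"
    by auto
  have "length (map y [0..<n]) = n" "\<forall>j<n. kpath K (map y [0..<n] ! j)" using y_path by simp_all
  then obtain tau' where fair': "fair_traj n tau'"
    and sat': "hsat (\<lambda>j m. klab K ((map y [0..<n] ! j) (progress tau' j m))) 0 (conj_list cs)"
    using sat unfolding ahltl_sat_def by blast
  show "hsat (\<lambda>j i. klab K (fst (u i ! j))) 0 (conj_list cs)"
  proof (rule hsat_conj_transfer[OF cs vars _ _ sat'])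
    fix k assume k: "k < n"
    have "surj (progress tau k)" "surj (progress tau' k)"
      using fair fair' k progress_surj by (auto simp: fair_traj_def)
    then have "stutter_equiv (\<lambda>m. klab K (y k (progress tau k m))) (\<lambda>m. klab K (y k (progress tau' k m)))"
      by (intro stutter_equiv_stutter_indices stutter_index_progress)
    then show "stutter_equiv (\<lambda>i. klab K (fst (u i ! k))) (\<lambda>m. klab K ((map y [0..<n] ! k) (progress tau' k m)))"
      using cur_y k by simp
  next
    fix a x z m assume "(a, x, z) \<in> agree_constraints cs"
    then show "a \<in> klab K (fst (u m ! x)) \<longleftrightarrow> a \<in> klab K (fst (u m ! z))"
      using greedy_run_consistent[OF En run, of m] unfolding consistent_def by blast
  qed
qed

lemma ahltl_imp_stut_block:
  fixes K :: "('s, 'ap) kripke"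
  assumes wf: "kripke_wf K" and vars: "vars phi \<subseteq> {..<n}"
    and adm: "admissible phi" and sat: "ahltl_sat K n phi"
  shows "hyperatl_block (stut (kripke_mscgs K)) (replicate n {None})
    (And (map_hltl Some phi) (conj_list (map fair_formula [0..<n])))"
proof -
  obtain cs where phi: "phi = conj_list cs" and cs: "\<forall>c\<in>set cs. eq_formula c \<or> stutter_inv_single c"
    using adm unfolding admissible_def by blast
  have vars_cs: "\<forall>c\<in>set cs. vars c \<subseteq> {..<n}" using vars phi by auto
  show ?thesis
    unfolding hyperatl_block_def
  proof (intro exI[of _ "\<lambda>j _. greedy_sched (agree_constraints cs) K n j"] conjI allI impI ballI)
    fix j and xi :: "unit option" assume "j < length (replicate n {None})" "xi \<in> replicate n {None} ! j"
    then show "is_strategy (stut (kripke_mscgs K)) (length (replicate n {None})) xi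
        (greedy_sched (agree_constraints cs) K n j)"
      using is_strategy_greedy_sched[OF wf] by simp
  next
    fix u assume "is_outcome (stut (kripke_mscgs K)) (replicate n {None})
      (\<lambda>j _. greedy_sched (agree_constraints cs) K n j) u"
    then show "hsat (\<lambda>j i. lab (stut (kripke_mscgs K)) (u i ! j)) 0
        (And (map_hltl Some phi) (conj_list (map fair_formula [0..<n])))"
      unfolding hsat_stut_block_formula using greedy_outcome_wins[OF wf cs vars_cs] sat phi by blast
  qed
qed

theorem theorem7p1:
  fixes K :: "('s, 'ap) kripke" and n :: nat and phi :: "'ap hltl"
  assumes "kripke_wf K"
    and "vars phi \<subseteq> {..<n}"
  shows "(hyperatl_block (stut (kripke_mscgs K)) (replicate n {None})
            (And (map_hltl Some phi) (conj_list (map fair_formula [0..<n])))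
          \<longrightarrow> ahltl_sat K n phi)
       \<and> (admissible phi \<longrightarrow>
           (hyperatl_block (stut (kripke_mscgs K)) (replicate n {None})
              (And (map_hltl Some phi) (conj_list (map fair_formula [0..<n])))
            \<longleftrightarrow> ahltl_sat K n phi))"
  using stut_block_imp_ahltl[OF assms] ahltl_imp_stut_block[OF assms] by blast

end
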